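(* Let $q_1,q_2,v$ be indeterminates and fix integers $1\le i<j$. Then $$\big\langle q_1^{\lambda_i}q_2^{\lambda_j}\big\rangle_v=\frac{(v)_\infty}{(v)_{i-1}\,(v^iq_1)_{j-i}\,(v^jq_1q_2)_\infty}=\frac{(v)_\infty}{(vq_1q_2)_\infty}\cdot\frac{(vq_1)_{i-1}\,(vq_1q_2)_{j-1}}{(v)_{i-1}\,(vq_1)_{j-1}}.$$
   Context: Notation: $(a)_0=1$, $(a)_r=\prod_{k=0}^{r-1}(1-av^k)$ for $r\ge1$, $(a)_\infty=\prod_{k\ge0}(1-av^k)$. For a function $f$ on the set $\mathcal P$ of partitions, $\langle f\rangle_v:=(v)_\infty\sum_{\lambda\in\mathcal P}f(\lambda)v^{|\lambda|}$, as a formal power series in $v$. Here $\lambda=(\lambda_1,\lambda_2,\ldots)$ with $\lambda_k=0$ for $k$ beyond the length of $\lambda$, and $\langle q_1^{\lambda_i}q_2^{\lambda_j}\rangle_v$ denotes $\langle f\rangle_v$ for $f(\lambda)=q_1^{\lambda_i}q_2^{\lambda_j}$. *)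

theory Defs
  imports "HOL-Computational_Algebra.Formal_Power_Series"
begin

definition partitions_of :: "nat \<Rightarrow> nat list set" where
  "partitions_of n = {xs. sorted_wrt (\<ge>) xs \<and> 0 \<notin> set xs \<and> sum_list xs = n}"

definition part :: "nat list \<Rightarrow> nat \<Rightarrow> nat" where
  "part xs k = (if 1 \<le> k \<and> k \<le> length xs then xs ! (k - 1) else 0)"

text \<open>Finite q-Pochhammer (a)_r = prod_{k<r} (1 - a v^k), with v = fps_X.\<close>
definition qpoch :: "'a::comm_ring_1 fps \<Rightarrow> nat \<Rightarrow> 'a fps" where
  "qpoch a r = (\<Prod>k<r. 1 - a * fps_X ^ k)"

definition qpoch_inf :: "'a::comm_ring_1 fps \<Rightarrow> 'a fps" where
  "qpoch_inf a = lim (\<lambda>r. qpoch a r)"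

definition bracket :: "(nat list \<Rightarrow> 'a::comm_ring_1) \<Rightarrow> 'a fps" where
  "bracket f = qpoch_inf fps_X * Abs_fps (\<lambda>n. \<Sum>xs\<in>partitions_of n. f xs)"

end

theory Submission
  imports Defs
begin

(* Removing the first column from a partition with exactly N parts is a bijection onto the
   partitions with at most N parts, and it divides the weight prod_k x_k^(lambda_k) by the
   column weight x_1 ... x_N.  Hence the generating function P_N of the partitions with at most
   N parts satisfies P_(N-1) = (1 - x_1 ... x_N v^N) P_N, i.e. P_N is the inverse of
   prod_(m<=N) (1 - x_1 ... x_m v^m); since P_N agrees with the full generating function up to
   degree N, the latter is the inverse of the infinite product.  For x_i = q1, x_j = q2 and all
   other x_k = 1 the column weight is 1, q1 or q1 q2 according as m < i, i <= m < j or j <= m,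
   so the product splits into the three q-Pochhammer symbols of the first formula; the second
   formula regroups them. *)

unbundle fps_syntax

lemma length_le_sum_list: "0 \<notin> set xs \<Longrightarrow> length xs \<le> sum_list (xs :: nat list)"
  by (induction xs) auto

lemma length_le_of_partitions_of: "lam \<in> partitions_of n \<Longrightarrow> length lam \<le> n"
  using length_le_sum_list by (auto simp: partitions_of_def)

lemma finite_partitions_of: "finite (partitions_of n)"
proof -
  have "partitions_of n \<subseteq> {xs. set xs \<subseteq> {0..n} \<and> length xs \<le> n}"
    using length_le_sum_list member_le_sum_list by (fastforce simp: partitions_of_def)
  then show ?thesis
    by (rule finite_subset) (rule finite_lists_length_le, simp)
qed

definition add_column :: "nat \<Rightarrow> nat list \<Rightarrow> nat list" where
  "add_column N mu = map Suc mu @ replicate (N - length mu) 1"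

definition remove_column :: "nat list \<Rightarrow> nat list" where
  "remove_column lam = filter (\<lambda>x. x \<noteq> 0) (map (\<lambda>x. x - 1) lam)"

lemma remove_column_add_column: "0 \<notin> set mu \<Longrightarrow> remove_column (add_column N mu) = mu"
  by (induction mu) (auto simp: remove_column_def add_column_def)

lemma add_column_remove_column:
  "sorted_wrt (\<ge>) lam \<Longrightarrow> 0 \<notin> set lam \<Longrightarrow> add_column (length lam) (remove_column lam) = lam"
proof (induction lam)
  case Nil
  then show ?case by (simp add: add_column_def remove_column_def)
next
  case (Cons a lam)
  show ?case
  proof (cases "a = 1")
    case True
    with Cons.prems have ones: "\<forall>y\<in>set lam. y = 1"
      by (fastforce simp: le_Suc_eq)
    then have "remove_column (a # lam) = []"
      using True by (auto simp: remove_column_def filter_empty_conv)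
    with True ones show ?thesis
      by (simp add: add_column_def replicate_length_same)
  next
    case False
    with Cons show ?thesis
      by (auto simp: add_column_def remove_column_def)
  qed
qed

lemma length_add_column: "length mu \<le> N \<Longrightarrow> length (add_column N mu) = N"
  by (simp add: add_column_def)

lemma part_add_column:
  "length mu \<le> N \<Longrightarrow> part (add_column N mu) k = (if 1 \<le> k \<and> k \<le> N then part mu k + 1 else 0)"
  by (auto simp: part_def add_column_def nth_append)

lemma sum_list_add_column:
  assumes "length mu \<le> N"
  shows "sum_list (add_column N mu) = sum_list mu + N"
proof -
  have "sum_list (map Suc mu) = sum_list mu + length mu"
    by (induction mu) auto
  with assms show ?thesis
    by (simp add: add_column_def sum_list_replicate)
qed

lemma add_column_in_partitions_of:
  assumes "mu \<in> partitions_of n" "length mu \<le> N"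
  shows "add_column N mu \<in> partitions_of (n + N)"
proof -
  have "sorted_wrt (\<ge>) (replicate m (1::nat))" for m
    by (induction m) auto
  then have "sorted_wrt (\<ge>) (add_column N mu)"
    using assms(1) by (auto simp: add_column_def partitions_of_def sorted_wrt_append sorted_wrt_map)
  moreover have "0 \<notin> set (add_column N mu)"
    using assms(1) by (auto simp: add_column_def partitions_of_def)
  ultimately show ?thesis
    using assms sum_list_add_column[OF assms(2)] by (simp add: partitions_of_def)
qed

lemma remove_column_in_partitions_of:
  assumes "lam \<in> partitions_of (n + length lam)"
  shows "remove_column lam \<in> partitions_of n" "length (remove_column lam) \<le> length lam"
proof -
  show len: "length (remove_column lam) \<le> length lam"
    using length_filter_le[of _ "map (\<lambda>x. x - 1) lam"] by (simp add: remove_column_def)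
  have "sorted_wrt (\<ge>) lam"
    using assms by (simp add: partitions_of_def)
  then have "sorted_wrt (\<ge>) (map (\<lambda>x. x - 1) lam)"
    by (simp add: sorted_wrt_map) (erule sorted_wrt_mono_rel[rotated], simp)
  then have sorted: "sorted_wrt (\<ge>) (remove_column lam)"
    unfolding remove_column_def by (rule sorted_wrt_filter)
  have "add_column (length lam) (remove_column lam) = lam"
    using add_column_remove_column assms by (auto simp: partitions_of_def)
  then have "sum_list (remove_column lam) + length lam = n + length lam"
    using sum_list_add_column[OF len] assms by (simp add: partitions_of_def)
  with sorted show "remove_column lam \<in> partitions_of n"
    by (auto simp: partitions_of_def remove_column_def)
qed

lemma bij_betw_add_column:
  "bij_betw (add_column N) {mu \<in> partitions_of n. length mu \<le> N}
     {lam \<in> partitions_of (n + N). length lam = N}"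
proof (rule bij_betw_byWitness[where f' = remove_column])
  show "\<forall>mu\<in>{mu \<in> partitions_of n. length mu \<le> N}. remove_column (add_column N mu) = mu"
    using remove_column_add_column by (auto simp: partitions_of_def)
  show "\<forall>lam\<in>{lam \<in> partitions_of (n + N). length lam = N}. add_column N (remove_column lam) = lam"
    using add_column_remove_column by (auto simp: partitions_of_def)
  show "add_column N ` {mu \<in> partitions_of n. length mu \<le> N} \<subseteq> {lam \<in> partitions_of (n + N). length lam = N}"
    using add_column_in_partitions_of length_add_column by auto
  show "remove_column ` {lam \<in> partitions_of (n + N). length lam = N} \<subseteq> {mu \<in> partitions_of n. length mu \<le> N}"
    using remove_column_in_partitions_of by auto
qed

definition part_weight :: "(nat \<Rightarrow> 'a::comm_monoid_mult) \<Rightarrow> nat list \<Rightarrow> 'a" where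
  "part_weight x lam = (\<Prod>k\<in>{1..length lam}. x k ^ part lam k)"

definition column_weight :: "(nat \<Rightarrow> 'a::comm_monoid_mult) \<Rightarrow> nat \<Rightarrow> 'a" where
  "column_weight x m = (\<Prod>k\<in>{1..m}. x k)"

lemma part_weight_eq_prod:
  assumes "length lam \<le> M"
  shows "part_weight x lam = (\<Prod>k\<in>{1..M}. x k ^ part lam k)"
  unfolding part_weight_def
  by (rule prod.mono_neutral_left) (use assms in \<open>auto simp: part_def\<close>)

lemma part_weight_Nil [simp]: "part_weight x [] = 1"
  by (simp add: part_weight_def)

lemma part_weight_add_column:
  assumes "length mu \<le> N"
  shows "part_weight x (add_column N mu) = column_weight x N * part_weight x mu"
proof -
  have "part_weight x (add_column N mu) = (\<Prod>k\<in>{1..N}. x k * x k ^ part mu k)"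
    unfolding part_weight_def length_add_column[OF assms]
    by (intro prod.cong) (simp_all add: part_add_column[OF assms])
  also have "\<dots> = column_weight x N * part_weight x mu"
    by (simp add: prod.distrib column_weight_def part_weight_eq_prod[OF assms])
  finally show ?thesis .
qed

definition partition_gf :: "(nat \<Rightarrow> 'a::comm_ring_1) \<Rightarrow> 'a fps" where
  "partition_gf x = Abs_fps (\<lambda>n. \<Sum>lam\<in>partitions_of n. part_weight x lam)"

definition bounded_partition_gf :: "(nat \<Rightarrow> 'a::comm_ring_1) \<Rightarrow> nat \<Rightarrow> 'a fps" where
  "bounded_partition_gf x N =
     Abs_fps (\<lambda>n. \<Sum>lam \<in> {lam \<in> partitions_of n. length lam \<le> N}. part_weight x lam)"

definition column_factor :: "(nat \<Rightarrow> 'a::comm_ring_1) \<Rightarrow> nat \<Rightarrow> 'a fps" where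
  "column_factor x m = 1 - fps_const (column_weight x m) * fps_X ^ m"

lemma bounded_partition_gf_0: "bounded_partition_gf x 0 = 1"
proof (rule fps_ext)
  fix n
  have "{lam \<in> partitions_of n. length lam \<le> 0} = (if n = 0 then {[]} else {})"
    by (auto simp: partitions_of_def)
  then show "bounded_partition_gf x 0 $ n = 1 $ n"
    by (simp add: bounded_partition_gf_def)
qed

lemma bounded_partition_gf_nth:
  assumes "n \<le> N"
  shows "bounded_partition_gf x N $ n = partition_gf x $ n"
proof -
  have "{lam \<in> partitions_of n. length lam \<le> N} = partitions_of n"
    using assms length_le_of_partitions_of order_trans by blast
  then show ?thesis
    by (simp add: bounded_partition_gf_def partition_gf_def)
qed

lemma sum_part_weight_length_eq:
  "(\<Sum>lam \<in> {lam \<in> partitions_of n. length lam = N}. part_weight x lam)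
     = (fps_const (column_weight x N) * fps_X ^ N * bounded_partition_gf x N) $ n"
proof (cases "N \<le> n")
  case True
  define m where "m = n - N"
  with True have n: "n = m + N"
    by simp
  have "(\<Sum>lam \<in> {lam \<in> partitions_of (m + N). length lam = N}. part_weight x lam)
      = (\<Sum>mu \<in> {mu \<in> partitions_of m. length mu \<le> N}. part_weight x (add_column N mu))"
    by (rule sum.reindex_bij_betw[OF bij_betw_add_column, symmetric])
  also have "\<dots> = column_weight x N * bounded_partition_gf x N $ m"
    unfolding bounded_partition_gf_def fps_nth_Abs_fps sum_distrib_left
    by (intro sum.cong) (simp_all add: part_weight_add_column)
  also have "\<dots> = (fps_const (column_weight x N) * (fps_X ^ N * bounded_partition_gf x N)) $ (m + N)"
    by (simp only: fps_mult_left_const_nth fps_X_power_mult_nth) simp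
  finally show ?thesis
    by (simp only: n mult.assoc)
next
  case False
  then have "{lam \<in> partitions_of n. length lam = N} = {}"
    using length_le_of_partitions_of not_le order_trans by blast
  with False show ?thesis
    by (simp only: mult.assoc fps_mult_left_const_nth fps_X_power_mult_nth) simp
qed

lemma bounded_partition_gf_Suc:
  "bounded_partition_gf x N = column_factor x (Suc N) * bounded_partition_gf x (Suc N)"
proof (rule fps_ext)
  fix n
  let ?w = "part_weight x"
  have "{lam \<in> partitions_of n. length lam \<le> Suc N}
      = {lam \<in> partitions_of n. length lam \<le> N} \<union> {lam \<in> partitions_of n. length lam = Suc N}"
    by auto
  then have "bounded_partition_gf x (Suc N) $ n
      = (\<Sum>lam \<in> {lam \<in> partitions_of n. length lam \<le> N}. ?w lam)
        + (\<Sum>lam \<in> {lam \<in> partitions_of n. length lam = Suc N}. ?w lam)"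
    unfolding bounded_partition_gf_def fps_nth_Abs_fps
    by (simp only:) (rule sum.union_disjoint, auto simp: finite_partitions_of)
  also have "\<dots> = bounded_partition_gf x N $ n
      + (fps_const (column_weight x (Suc N)) * fps_X ^ Suc N * bounded_partition_gf x (Suc N)) $ n"
    unfolding sum_part_weight_length_eq by (simp add: bounded_partition_gf_def)
  finally show "bounded_partition_gf x N $ n = (column_factor x (Suc N) * bounded_partition_gf x (Suc N)) $ n"
    by (simp add: column_factor_def algebra_simps)
qed

lemma column_factors_mult_bounded_partition_gf:
  "(\<Prod>m\<in>{1..N}. column_factor x m) * bounded_partition_gf x N = 1"
proof (induction N)
  case 0
  then show ?case by (simp add: bounded_partition_gf_0)
next
  case (Suc N)
  then show ?case
    by (simp add: prod.nat_ivl_Suc' bounded_partition_gf_Suc[of x N] mult_ac)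
qed

lemma fps_mult_nth_cong:
  fixes f g h :: "'a::comm_ring_1 fps"
  assumes "\<And>k. k \<le> n \<Longrightarrow> f $ k = g $ k"
  shows "(f * h) $ n = (g * h) $ n"
  unfolding fps_mult_nth using assms by (intro sum.cong) auto

lemma column_factors_mult_partition_gf_nth:
  assumes "n \<le> N"
  shows "((\<Prod>m\<in>{1..N}. column_factor x m) * partition_gf x) $ n = (1 :: 'a::comm_ring_1 fps) $ n"
proof -
  have "((\<Prod>m\<in>{1..N}. column_factor x m) * partition_gf x) $ n
      = (bounded_partition_gf x N * (\<Prod>m\<in>{1..N}. column_factor x m)) $ n"
    unfolding mult.commute[of _ "partition_gf x"]
    using assms by (intro fps_mult_nth_cong) (simp add: bounded_partition_gf_nth)
  also have "\<dots> = (1 :: 'a fps) $ n"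
    by (simp only: mult.commute[of "bounded_partition_gf x N"] column_factors_mult_bounded_partition_gf)
  finally show ?thesis .
qed

lemma qpoch_Suc: "qpoch a (Suc r) = qpoch a r * (1 - a * fps_X ^ r)"
  by (simp add: qpoch_def)

lemma qpoch_add: "qpoch a (m + r) = qpoch a m * qpoch (a * fps_X ^ m) r"
  by (induction r) (simp_all add: qpoch_def power_add mult_ac)

lemma qpoch_nth_0: "a $ 0 = 0 \<Longrightarrow> qpoch a r $ 0 = 1"
  by (induction r) (simp_all add: qpoch_def fps_mult_nth_0)

lemma qpoch_nth_stable:
  assumes "a $ 0 = 0" "k \<le> r"
  shows "qpoch a r $ k = qpoch a k $ k"
  using assms(2)
proof (induction r rule: dec_induct)
  case base
  then show ?case by simp
next
  case (step r)
  have "qpoch a (Suc r) = qpoch a r - qpoch a r * a * fps_X ^ r"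
    by (simp add: qpoch_Suc right_diff_distrib mult.assoc)
  moreover have "(qpoch a r * a * fps_X ^ r) $ k = 0"
    using step(1) assms(1) by (auto simp: fps_X_power_mult_right_nth fps_mult_nth_0)
  ultimately show ?case
    using step by simp
qed

lemma qpoch_inf_eq_Abs_fps:
  assumes "a $ 0 = 0"
  shows "qpoch_inf a = Abs_fps (\<lambda>k. qpoch a k $ k)"
  unfolding qpoch_inf_def
proof (rule limI, rule tendsto_fpsI)
  fix n
  show "\<forall>\<^sub>F r in sequentially. qpoch a r $ n = Abs_fps (\<lambda>k. qpoch a k $ k) $ n"
    using eventually_ge_at_top[of n]
    by eventually_elim (subst fps_nth_Abs_fps, rule qpoch_nth_stable[OF assms])
qed

lemma qpoch_inf_nth:
  assumes "a $ 0 = 0" "k \<le> r"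
  shows "qpoch_inf a $ k = qpoch a r $ k"
  unfolding qpoch_inf_eq_Abs_fps[OF assms(1)] fps_nth_Abs_fps
  by (rule qpoch_nth_stable[OF assms, symmetric])

lemma qpoch_inf_nth_0: "a $ 0 = 0 \<Longrightarrow> qpoch_inf a $ 0 = 1"
  using qpoch_inf_nth[of a 0 0] qpoch_nth_0 by simp

lemma qpoch_inf_eq_qpoch_mult:
  assumes "a $ 0 = 0"
  shows "qpoch_inf a = qpoch a m * qpoch_inf (a * fps_X ^ m)"
proof (rule fps_ext)
  fix n
  have "qpoch_inf a $ n = (qpoch (a * fps_X ^ m) n * qpoch a m) $ n"
    using qpoch_inf_nth[OF assms, of n "m + n"] by (simp add: qpoch_add mult.commute)
  also have "\<dots> = (qpoch_inf (a * fps_X ^ m) * qpoch a m) $ n"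
  proof (rule fps_mult_nth_cong)
    fix k assume "k \<le> n"
    moreover have "(a * fps_X ^ m) $ 0 = 0"
      using assms by (simp add: fps_mult_nth_0)
    ultimately show "qpoch (a * fps_X ^ m) n $ k = qpoch_inf (a * fps_X ^ m) $ k"
      by (simp add: qpoch_inf_nth)
  qed
  finally show "qpoch_inf a $ n = (qpoch a m * qpoch_inf (a * fps_X ^ m)) $ n"
    by (simp add: mult.commute)
qed

lemma prod_column_factor_const:
  assumes "a \<le> b" and const: "\<And>m. a < m \<Longrightarrow> m \<le> b \<Longrightarrow> column_weight x m = c"
  shows "(\<Prod>m\<in>{a<..b}. column_factor x m) = qpoch (fps_X ^ Suc a * fps_const c) (b - a)"
  using assms(1) const
proof (induction b rule: dec_induct)
  case base
  then show ?case by (simp add: qpoch_def)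
next
  case (step b)
  have "{a<..Suc b} = insert (Suc b) {a<..b}"
    using step(1) by auto
  moreover have "fps_X ^ Suc a * fps_const c * fps_X ^ (b - a) = fps_const c * fps_X ^ Suc b"
    using step(1) by (simp add: power_add[symmetric] mult_ac)
  ultimately show ?case
    using step by (simp add: Suc_diff_le qpoch_Suc column_factor_def mult.commute)
qed

lemma prod_greaterThanAtMost_split:
  fixes f :: "nat \<Rightarrow> 'a::comm_monoid_mult"
  shows "a \<le> b \<Longrightarrow> b \<le> c \<Longrightarrow> prod f {a<..c} = prod f {a<..b} * prod f {b<..c}"
  by (simp add: prod.union_disjoint[symmetric] ivl_disj_un_two(6))

definition pair_weights :: "nat \<Rightarrow> 'a \<Rightarrow> nat \<Rightarrow> 'a \<Rightarrow> nat \<Rightarrow> 'a::comm_monoid_mult" where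
  "pair_weights i a j b k = (if k = i then a else 1) * (if k = j then b else 1)"

lemma part_weight_pair_weights:
  assumes "1 \<le> i" "1 \<le> j"
  shows "part_weight (pair_weights i a j b) lam = a ^ part lam i * b ^ part lam j"
proof -
  define M where "M = max (length lam) (max i j)"
  have M: "length lam \<le> M" "i \<le> M" "j \<le> M"
    by (simp_all add: M_def)
  have "part_weight (pair_weights i a j b) lam
      = (\<Prod>k\<in>{1..M}. (if k = i then a ^ part lam k else 1) * (if k = j then b ^ part lam k else 1))"
    unfolding part_weight_eq_prod[OF M(1)] pair_weights_def
    by (intro prod.cong) (simp_all add: power_mult_distrib)
  also have "\<dots> = a ^ part lam i * b ^ part lam j"
    using assms M by (simp add: prod.distrib)
  finally show ?thesis .
qed

lemma column_weight_pair_weights: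
  assumes "1 \<le> i" "1 \<le> j"
  shows "column_weight (pair_weights i a j b) m = (if i \<le> m then a else 1) * (if j \<le> m then b else 1)"
  unfolding column_weight_def pair_weights_def prod.distrib
  using assms by simp

lemma column_factors_pair_weights:
  assumes "1 \<le> i" "i < j"
  shows "(\<Prod>m\<in>{1..j - 1 + R}. column_factor (pair_weights i a j b) m)
    = qpoch fps_X (i - 1) * qpoch (fps_X ^ i * fps_const a) (j - i)
      * qpoch (fps_X ^ j * fps_const a * fps_const b) R"
proof -
  let ?f = "column_factor (pair_weights i a j b)"
  have "{1..j - 1 + R} = {0<..j - 1 + R}"
    by auto
  then have "(\<Prod>m\<in>{1..j - 1 + R}. ?f m)
      = prod ?f {0<..i - 1} * prod ?f {i - 1<..j - 1} * prod ?f {j - 1<..j - 1 + R}"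
    using assms prod_greaterThanAtMost_split[of 0 "j - 1" "j - 1 + R" ?f]
      prod_greaterThanAtMost_split[of 0 "i - 1" "j - 1" ?f] by simp
  moreover have "prod ?f {0<..i - 1} = qpoch (fps_X ^ Suc 0 * fps_const 1) (i - 1 - 0)"
    by (rule prod_column_factor_const) (use assms in \<open>auto simp: column_weight_pair_weights\<close>)
  moreover have "prod ?f {i - 1<..j - 1} = qpoch (fps_X ^ Suc (i - 1) * fps_const a) (j - 1 - (i - 1))"
    by (rule prod_column_factor_const) (use assms in \<open>auto simp: column_weight_pair_weights\<close>)
  moreover have "prod ?f {j - 1<..j - 1 + R} = qpoch (fps_X ^ Suc (j - 1) * fps_const (a * b)) (j - 1 + R - (j - 1))"
    by (rule prod_column_factor_const) (use assms in \<open>auto simp: column_weight_pair_weights\<close>)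
  ultimately show ?thesis
    using assms by (simp add: mult.assoc)
qed

lemma qpoch_product_mult_partition_gf:
  assumes "1 \<le> i" "i < j"
  shows "qpoch fps_X (i - 1) * qpoch (fps_X ^ i * fps_const a) (j - i)
      * qpoch_inf (fps_X ^ j * fps_const a * fps_const b) * partition_gf (pair_weights i a j b)
    = (1 :: 'a::comm_ring_1 fps)"
proof (rule fps_ext)
  fix n
  let ?c = "fps_X ^ j * fps_const a * fps_const b"
  let ?F = "partition_gf (pair_weights i a j b)"
  let ?AF = "qpoch fps_X (i - 1) * qpoch (fps_X ^ i * fps_const a) (j - i) * ?F"
  have "?c $ 0 = 0"
    using assms by simp
  then have "(qpoch_inf ?c * ?AF) $ n = (qpoch ?c n * ?AF) $ n"
    by (intro fps_mult_nth_cong) (simp add: qpoch_inf_nth)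
  also have "\<dots> = (qpoch fps_X (i - 1) * qpoch (fps_X ^ i * fps_const a) (j - i) * qpoch ?c n * ?F) $ n"
    by (simp only: mult_ac)
  also have "\<dots> = ((\<Prod>m\<in>{1..j - 1 + n}. column_factor (pair_weights i a j b) m) * ?F) $ n"
    by (simp only: column_factors_pair_weights[OF assms])
  also have "\<dots> = 1 $ n"
    by (rule column_factors_mult_partition_gf_nth) simp
  finally show "(qpoch fps_X (i - 1) * qpoch (fps_X ^ i * fps_const a) (j - i) * qpoch_inf ?c * ?F) $ n = 1 $ n"
    by (simp only: mult_ac)
qed

lemma divide_qpoch_product_regroup:
  fixes u :: "'a::field fps"
  assumes "1 \<le> i" "i < j"
  shows "u / (qpoch fps_X (i - 1) * qpoch (fps_X ^ i * fps_const a) (j - i)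
               * qpoch_inf (fps_X ^ j * fps_const a * fps_const b))
    = u / qpoch_inf (fps_X * fps_const a * fps_const b)
      * ((qpoch (fps_X * fps_const a) (i - 1) * qpoch (fps_X * fps_const a * fps_const b) (j - 1))
         / (qpoch fps_X (i - 1) * qpoch (fps_X * fps_const a) (j - 1)))"
proof -
  define A where "A = qpoch (fps_X :: 'a fps) (i - 1)"
  define B where "B = qpoch (fps_X ^ i * fps_const a) (j - i)"
  define C where "C = qpoch_inf (fps_X ^ j * fps_const a * fps_const b)"
  define P where "P = qpoch (fps_X * fps_const a) (i - 1)"
  define Q where "Q = qpoch (fps_X * fps_const a * fps_const b) (j - 1)"
  have shift_j: "fps_X * fps_const a * fps_const b * fps_X ^ (j - 1) = fps_X ^ j * fps_const a * fps_const b"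
    using assms by (cases j) (simp_all add: mult_ac)
  have shift_i: "fps_X * fps_const a * fps_X ^ (i - 1) = fps_X ^ i * fps_const a"
    using assms by (cases i) (simp_all add: mult_ac)
  have "qpoch_inf (fps_X * fps_const a * fps_const b) = Q * C"
    unfolding Q_def C_def shift_j[symmetric] by (rule qpoch_inf_eq_qpoch_mult) simp
  moreover have "j - 1 = (i - 1) + (j - i)"
    using assms by simp
  then have "qpoch (fps_X * fps_const a) (j - 1) = P * B"
    unfolding P_def B_def shift_i[symmetric] by (simp only: qpoch_add)
  moreover have "A $ 0 \<noteq> 0" "B $ 0 \<noteq> 0" "C $ 0 \<noteq> 0" "P $ 0 \<noteq> 0" "Q $ 0 \<noteq> 0"
    using assms by (simp_all add: A_def B_def C_def P_def Q_def qpoch_nth_0 qpoch_inf_nth_0)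
  moreover from this have "P * Q * inverse (P * Q) = 1"
    by (simp add: inverse_mult_eq_1' fps_mult_nth_0)
  ultimately show ?thesis
    unfolding A_def [symmetric] B_def [symmetric] C_def [symmetric] P_def [symmetric] Q_def [symmetric]
    by (simp add: fps_divide_unit fps_inverse_mult mult_ac)
qed

theorem lemma3p4:
  fixes q1 q2 :: "'a::field" and i j :: nat
  assumes "1 \<le> i" and "i < j"
  shows "bracket (\<lambda>lam. q1 ^ part lam i * q2 ^ part lam j)
           = qpoch_inf fps_X /
             (qpoch fps_X (i - 1) * qpoch (fps_X ^ i * fps_const q1) (j - i)
              * qpoch_inf (fps_X ^ j * fps_const q1 * fps_const q2))
       \<and> qpoch_inf fps_X /
             (qpoch fps_X (i - 1) * qpoch (fps_X ^ i * fps_const q1) (j - i)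
              * qpoch_inf (fps_X ^ j * fps_const q1 * fps_const q2))
           = qpoch_inf fps_X / qpoch_inf (fps_X * fps_const q1 * fps_const q2)
             * ((qpoch (fps_X * fps_const q1) (i - 1) * qpoch (fps_X * fps_const q1 * fps_const q2) (j - 1))
                / (qpoch fps_X (i - 1) * qpoch (fps_X * fps_const q1) (j - 1)))"
proof
  let ?D = "qpoch fps_X (i - 1) * qpoch (fps_X ^ i * fps_const q1) (j - i)
              * qpoch_inf (fps_X ^ j * fps_const q1 * fps_const q2)"
  let ?F = "partition_gf (pair_weights i q1 j q2)"
  have inverse: "?D * ?F = 1"
    by (rule qpoch_product_mult_partition_gf[OF assms])
  then have "?D $ 0 \<noteq> 0"
    using fps_mult_nth_0[of ?D ?F] by (metis fps_one_nth mult_zero_left zero_neq_one)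
  have "bracket (\<lambda>lam. q1 ^ part lam i * q2 ^ part lam j) = qpoch_inf fps_X * ?F"
    using assms by (simp add: bracket_def partition_gf_def part_weight_pair_weights)
  also have "\<dots> = qpoch_inf fps_X * inverse ?D"
    by (simp only: fps_inverse_unique[OF inverse])
  also have "\<dots> = qpoch_inf fps_X / ?D"
    by (rule fps_divide_unit[symmetric]) fact
  finally show "bracket (\<lambda>lam. q1 ^ part lam i * q2 ^ part lam j) = qpoch_inf fps_X / ?D" .
  show "qpoch_inf fps_X / ?D = qpoch_inf fps_X / qpoch_inf (fps_X * fps_const q1 * fps_const q2)
      * ((qpoch (fps_X * fps_const q1) (i - 1) * qpoch (fps_X * fps_const q1 * fps_const q2) (j - 1))
         / (qpoch fps_X (i - 1) * qpoch (fps_X * fps_const q1) (j - 1)))"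
    by (rule divide_qpoch_product_regroup[OF assms])
qed

end
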